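(* Let $\alpha$ be a set with an involution $\tau$. For $a,b\in\alpha$ let $w_{a,b}$ denote the nanoword $(\{A,B\},ABAB)$ with $|A|=a$, $|B|=b$. If $\tau(a)\neq b$, then $w_{a,b}$ is not contractible. Two nanowords $w_{a,b}$ and $w_{a',b'}$ with $\tau(a)\neq b$ and $\tau(a')\neq b'$ are homotopic if and only if $a=a'$ and $b=b'$.
   Context: Fix a set $\alpha$ with an involution $\tau:\alpha\to\alpha$. An $\alpha$-alphabet is a set $\mathcal A$ with a map $\mathcal A\to\alpha$, $A\mapsto|A|$. A nanoword over $\alpha$ is a pair $(\mathcal A,w)$ where $\mathcal A$ is a finite $\alpha$-alphabet and $w$ is a word in the letters of $\mathcal A$ in which every letter of $\mathcal A$ occurs exactly twice; its length is the length of $w$. Two nanowords $(\mathcal A_1,w_1),(\mathcal A_2,w_2)$ are isomorphic if there is a bijection $f:\mathcal A_1\to\mathcal A_2$ with $|f(A)|=|A|$ for all $A$ and $w_2$ is obtained from $w_1$ by applying $f$ letterwise. Homotopy moves (here $x,y,z,t$ are words in the remaining letters, and smaller alphabets carry the restricted projection): (1) $(\mathcal A,xAAy)\mapsto(\mathcal A\setminus\{A\},xy)$; (2) $(\mathcal A,xAByBAz)\mapsto(\mathcal A\setminus\{A,B\},xyz)$ whenever $|B|=\tau(|A|)$; (3) $(\mathcal A,xAByACzBCt)\mapsto(\mathcal A,xBAyCAzCBt)$ whenever $A,B,C$ are distinct and $|A|=|B|=|C|$. Homotopy is the equivalence relation on nanowords generated by isomorphisms, these moves and their inverses. A nanoword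 is contractible if it is homotopic to the empty nanoword. *)

theory Defs
  imports Main
begin

text \<open>A nanoword over alpha is represented as a pair (w, p): w is a word whose letters
  are natural numbers, the alphabet is set w, and p restricted to set w is the projection
  to alpha. Values of p outside set w are irrelevant (isomorphism identifies them).\<close>

type_synonym 'a nanoword = "nat list \<times> (nat \<Rightarrow> 'a)"

definition is_nanoword :: "'a nanoword \<Rightarrow> bool" where
  "is_nanoword u \<longleftrightarrow> (\<forall>A\<in>set (fst u). count_list (fst u) A = 2)"

definition nw_iso :: "'a nanoword \<Rightarrow> 'a nanoword \<Rightarrow> bool" where
  "nw_iso u v \<longleftrightarrow> is_nanoword u \<and> is_nanoword v \<and>
     (\<exists>f. bij_betw f (set (fst u)) (set (fst v)) \<and>
          (\<forall>A\<in>set (fst u). snd v (f A) = snd u A) \<and>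
          fst v = map f (fst u))"

definition nw_move :: "('a \<Rightarrow> 'a) \<Rightarrow> 'a nanoword \<Rightarrow> 'a nanoword \<Rightarrow> bool" where
  "nw_move \<tau> u v \<longleftrightarrow> is_nanoword u \<and> is_nanoword v \<and> snd v = snd u \<and>
    ((\<exists>x y A. fst u = x @ [A, A] @ y \<and> fst v = x @ y)
   \<or> (\<exists>x y z A B. fst u = x @ [A, B] @ y @ [B, A] @ z \<and> fst v = x @ y @ z
          \<and> snd u B = \<tau> (snd u A))
   \<or> (\<exists>x y z t A B C. fst u = x @ [A, B] @ y @ [A, C] @ z @ [B, C] @ t
          \<and> fst v = x @ [B, A] @ y @ [C, A] @ z @ [C, B] @ t
          \<and> A \<noteq> B \<and> B \<noteq> C \<and> A \<noteq> C
          \<and> snd u A = snd u B \<and> snd u B = snd u C))"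

definition nw_homotopic :: "('a \<Rightarrow> 'a) \<Rightarrow> 'a nanoword \<Rightarrow> 'a nanoword \<Rightarrow> bool" where
  "nw_homotopic \<tau> = (symclp (\<lambda>u v. nw_iso u v \<or> nw_move \<tau> u v))\<^sup>*\<^sup>*"

definition nw_empty :: "'a nanoword" where
  "nw_empty = ([], undefined)"

definition nw_contractible :: "('a \<Rightarrow> 'a) \<Rightarrow> 'a nanoword \<Rightarrow> bool" where
  "nw_contractible \<tau> u \<longleftrightarrow> nw_homotopic \<tau> u nw_empty"

text \<open>w_{a,b} = ({A,B}, ABAB) with |A| = a, |B| = b; here A = 0, B = 1.\<close>
definition w_ab :: "'a \<Rightarrow> 'a \<Rightarrow> 'a nanoword" where
  "w_ab a b = ([0, 1, 0, 1], (\<lambda>n. if n = 0 then a else b))"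

end

theory Submission
  imports Defs "HOL-Library.Numeral_Type"
begin

text \<open>In a nanoword, a letter \<open>Y\<close>
  interlaced with \<open>X\<close> as \<open>X..Y..X..Y\<close> resp. \<open>Y..X..Y..X\<close> contributes \<open>\<chi>\<^sub>1 |Y|\<close> resp.
  \<open>\<chi>\<^sub>2 |Y|\<close> to the linking \<open>lk X\<close>, and the sum over all letters \<open>X\<close> of \<open>\<psi> |X| (lk X)\<close> is a
  homotopy invariant provided \<open>\<psi> a 0 = 0\<close> (move 1), \<open>\<chi>\<^sub>1\<close>, \<open>\<chi>\<^sub>2\<close> and \<open>\<psi>\<close> are odd under \<open>\<tau>\<close>
  (move 2: its two letters have equal linking and opposite projections) and \<open>\<psi> a\<close> is periodic
  with period \<open>\<chi>\<^sub>1 a + \<chi>\<^sub>2 a\<close> (move 3 changes only the linking of its middle letter, by exactly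
  that amount). On \<open>w_ab a b\<close> the invariant equals \<open>\<psi> a (\<chi>\<^sub>1 b) + \<psi> b (\<chi>\<^sub>2 a)\<close>, and for each
  pair \<open>(a, b)\<close> with \<open>\<tau> a \<noteq> b\<close> the data can be chosen so that this value separates \<open>(a, b)\<close>
  from every other such pair and from the empty word.\<close>

definition interlaced :: "'a list \<Rightarrow> 'a \<Rightarrow> 'a \<Rightarrow> bool" where
  "interlaced w X Y \<longleftrightarrow> filter (\<lambda>C. C = X \<or> C = Y) w = [X, Y, X, Y]"

lemma interlaced_mem: "interlaced w X Y \<Longrightarrow> X \<in> set w \<and> Y \<in> set w"
  unfolding interlaced_def by (metis filter_is_subset list.set_intros(1,2) subsetD)

lemma filter_eq_Nil_if_not_mem:
  "X \<notin> set w \<Longrightarrow> filter (\<lambda>C. C = X) w = []"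
  "X \<notin> set w \<Longrightarrow> Y \<notin> set w \<Longrightarrow> filter (\<lambda>C. C = X \<or> C = Y) w = []"
  by (auto simp: filter_empty_conv)

lemma interlaced_map:
  assumes f: "inj_on f (set w)" and XY: "X \<in> set w" "Y \<in> set w"
  shows "interlaced (map f w) (f X) (f Y) \<longleftrightarrow> interlaced w X Y"
proof -
  let ?P = "\<lambda>C. C = X \<or> C = Y"
  have "filter (\<lambda>C. C = f X \<or> C = f Y) (map f w) = map f (filter ?P w)"
    unfolding filter_map using f XY by (auto intro!: arg_cong[where f = "map f"] filter_cong dest: inj_onD)
  moreover have "map f (filter ?P w) = map f [X, Y, X, Y] \<longleftrightarrow> filter ?P w = [X, Y, X, Y]"
    by (rule inj_on_map_eq_map, rule inj_on_subset[OF f]) (use XY in auto)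
  ultimately show ?thesis by (simp add: interlaced_def)
qed

lemma alternating_eq_append_Cons_Cons: "xs @ A # A # ys = [X, Y, X, Y] \<Longrightarrow> X = Y"
  by (auto simp: append_eq_Cons_conv Cons_eq_append_conv)

lemma append_Cons_eq_alternating_iff:
  assumes "A \<notin> set xs" "A \<notin> set ys" "D \<noteq> A"
  shows "xs @ A # ys @ A # zs = [D, A, D, A] \<longleftrightarrow> xs = [D] \<and> ys = [D] \<and> zs = []"
    and "xs @ A # ys @ A # zs = [A, D, A, D] \<longleftrightarrow> xs = [] \<and> ys = [D] \<and> zs = [D]"
  using assms by (auto simp: append_eq_Cons_conv Cons_eq_append_conv)

lemma interlaced_split_iff:
  assumes "A \<notin> set x" "A \<notin> set y" "A \<notin> set z" "D \<noteq> A"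
  shows "interlaced (x @ A # y @ A # z) D A \<longleftrightarrow>
           filter (\<lambda>C. C = D) x = [D] \<and> filter (\<lambda>C. C = D) y = [D] \<and> filter (\<lambda>C. C = D) z = []"
    and "interlaced (x @ A # y @ A # z) A D \<longleftrightarrow>
           filter (\<lambda>C. C = D) x = [] \<and> filter (\<lambda>C. C = D) y = [D] \<and> filter (\<lambda>C. C = D) z = [D]"
proof -
  have "filter (\<lambda>C. C = D \<or> C = A) w = filter (\<lambda>C. C = D) w" if "A \<notin> set w" for w
    by (rule filter_cong) (use that in auto)
  then show "interlaced (x @ A # y @ A # z) D A \<longleftrightarrow>
           filter (\<lambda>C. C = D) x = [D] \<and> filter (\<lambda>C. C = D) y = [D] \<and> filter (\<lambda>C. C = D) z = []"
    and "interlaced (x @ A # y @ A # z) A D \<longleftrightarrow>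
           filter (\<lambda>C. C = D) x = [] \<and> filter (\<lambda>C. C = D) y = [D] \<and> filter (\<lambda>C. C = D) z = [D]"
    using append_Cons_eq_alternating_iff[of A "filter (\<lambda>C. C = D) x" "filter (\<lambda>C. C = D) y" D
        "filter (\<lambda>C. C = D) z"] assms
    by (auto simp: interlaced_def disj_commute[of "_ = A"])
qed

lemma interlaced_move_2:
  assumes letters: "{A, B} \<inter> set (x @ y @ z) = {}" and AB: "A \<noteq> B"
  shows "X \<in> {A, B} \<Longrightarrow> Y \<in> {A, B} \<Longrightarrow> \<not> interlaced (x @ [A, B] @ y @ [B, A] @ z) X Y"
    and "D \<notin> {A, B} \<Longrightarrow>
      interlaced (x @ [A, B] @ y @ [B, A] @ z) D A \<longleftrightarrow> interlaced (x @ [A, B] @ y @ [B, A] @ z) D B"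
    and "D \<notin> {A, B} \<Longrightarrow>
      interlaced (x @ [A, B] @ y @ [B, A] @ z) A D \<longleftrightarrow> interlaced (x @ [A, B] @ y @ [B, A] @ z) B D"
proof -
  let ?u = "x @ [A, B] @ y @ [B, A] @ z"
  have not_mem: "A \<notin> set x" "A \<notin> set y" "A \<notin> set z" "B \<notin> set x" "B \<notin> set y" "B \<notin> set z"
    using letters by auto
  show "\<not> interlaced ?u X Y" if "X \<in> {A, B}" "Y \<in> {A, B}"
    using that AB not_mem by (auto simp: interlaced_def filter_eq_Nil_if_not_mem)
  assume D: "D \<notin> {A, B}"
  have "interlaced ?u D A \<longleftrightarrow> interlaced (x @ A # y @ A # z) D A"
    "interlaced ?u A D \<longleftrightarrow> interlaced (x @ A # y @ A # z) A D"
    "interlaced ?u D B \<longleftrightarrow> interlaced (x @ B # y @ B # z) D B"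
    "interlaced ?u B D \<longleftrightarrow> interlaced (x @ B # y @ B # z) B D"
    using D AB by (auto simp: interlaced_def)
  then show "interlaced ?u D A \<longleftrightarrow> interlaced ?u D B" and "interlaced ?u A D \<longleftrightarrow> interlaced ?u B D"
    using interlaced_split_iff[of A x y z D] interlaced_split_iff[of B x y z D] not_mem D by simp_all
qed

lemma interlaced_move_3:
  assumes letters: "{A, B, C} \<inter> set (x @ y @ z @ t) = {}" and distinct: "A \<noteq> B" "B \<noteq> C" "A \<noteq> C"
  shows "X \<notin> {A, B, C} \<or> Y \<notin> {A, B, C} \<Longrightarrow>
      interlaced (x @ [A, B] @ y @ [A, C] @ z @ [B, C] @ t) X Y \<longleftrightarrow>
      interlaced (x @ [B, A] @ y @ [C, A] @ z @ [C, B] @ t) X Y"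
    and "X \<in> {A, B, C} \<Longrightarrow> Y \<in> {A, B, C} \<Longrightarrow>
      interlaced (x @ [A, B] @ y @ [A, C] @ z @ [B, C] @ t) X Y \<longleftrightarrow> (X, Y) \<in> {(A, B), (B, C)}"
    and "X \<in> {A, B, C} \<Longrightarrow> Y \<in> {A, B, C} \<Longrightarrow>
      interlaced (x @ [B, A] @ y @ [C, A] @ z @ [C, B] @ t) X Y \<longleftrightarrow> (X, Y) = (A, C)"
proof -
  show "interlaced (x @ [A, B] @ y @ [A, C] @ z @ [B, C] @ t) X Y \<longleftrightarrow>
      interlaced (x @ [B, A] @ y @ [C, A] @ z @ [C, B] @ t) X Y" if "X \<notin> {A, B, C} \<or> Y \<notin> {A, B, C}"
    using that distinct by (auto simp: interlaced_def)
  have not_mem: "L \<notin> set x" "L \<notin> set y" "L \<notin> set z" "L \<notin> set t" if "L \<in> {A, B, C}" for L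
    using that letters by auto
  show "interlaced (x @ [A, B] @ y @ [A, C] @ z @ [B, C] @ t) X Y \<longleftrightarrow> (X, Y) \<in> {(A, B), (B, C)}"
    and "interlaced (x @ [B, A] @ y @ [C, A] @ z @ [C, B] @ t) X Y \<longleftrightarrow> (X, Y) = (A, C)"
    if "X \<in> {A, B, C}" "Y \<in> {A, B, C}"
    using that distinct not_mem[of A] not_mem[of B] not_mem[of C]
    by (auto simp: interlaced_def filter_eq_Nil_if_not_mem)
qed

locale linking_invariant =
  fixes \<tau> :: "'a \<Rightarrow> 'a" and \<chi>\<^sub>1 \<chi>\<^sub>2 :: "'a \<Rightarrow> 'g::ab_group_add"
    and \<psi> :: "'a \<Rightarrow> 'g \<Rightarrow> 'h::ab_group_add"
  assumes \<psi>_zero: "\<psi> a 0 = 0"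
    and \<chi>\<^sub>1_\<tau>: "\<chi>\<^sub>1 (\<tau> a) = - \<chi>\<^sub>1 a" and \<chi>\<^sub>2_\<tau>: "\<chi>\<^sub>2 (\<tau> a) = - \<chi>\<^sub>2 a"
    and \<psi>_\<tau>: "\<psi> (\<tau> a) L = - \<psi> a L"
    and \<psi>_periodic: "\<psi> a (L + (\<chi>\<^sub>1 a + \<chi>\<^sub>2 a)) = \<psi> a L"
begin

definition linking_term :: "nat list \<Rightarrow> (nat \<Rightarrow> 'a) \<Rightarrow> nat \<Rightarrow> nat \<Rightarrow> 'g" where
  "linking_term w p X Y =
     (if interlaced w X Y then \<chi>\<^sub>1 (p Y) else if interlaced w Y X then \<chi>\<^sub>2 (p Y) else 0)"

definition linking :: "nat list \<Rightarrow> (nat \<Rightarrow> 'a) \<Rightarrow> nat \<Rightarrow> 'g" where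
  "linking w p X = (\<Sum>Y\<in>set w. linking_term w p X Y)"

definition invariant :: "'a nanoword \<Rightarrow> 'h" where
  "invariant u = (\<Sum>X\<in>set (fst u). \<psi> (snd u X) (linking (fst u) (snd u) X))"

lemma linking_eq_sum:
  assumes "finite S" "set w \<subseteq> S"
  shows "linking w p X = (\<Sum>Y\<in>S. linking_term w p X Y)"
  unfolding linking_def
  by (rule sum.mono_neutral_left) (use assms in \<open>auto simp: linking_term_def dest: interlaced_mem\<close>)

lemma linking_eq_0: "X \<notin> set w \<Longrightarrow> linking w p X = 0"
  unfolding linking_def by (rule sum.neutral) (auto simp: linking_term_def dest: interlaced_mem)

lemma invariant_eq_sum:
  assumes "finite S" "set w \<subseteq> S"
  shows "invariant (w, p) = (\<Sum>X\<in>S. \<psi> (p X) (linking w p X))"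
  unfolding invariant_def fst_conv snd_conv
  by (rule sum.mono_neutral_left) (use assms in \<open>auto simp: linking_eq_0 \<psi>_zero\<close>)

lemma invariant_cong:
  assumes "\<And>X Y. interlaced u X Y \<longleftrightarrow> interlaced v X Y"
  shows "invariant (u, p) = invariant (v, p)"
proof -
  let ?S = "set u \<union> set v"
  have "linking_term u p = linking_term v p"
    by (intro ext) (simp add: linking_term_def assms)
  then have "linking u p X = linking v p X" for X
    using linking_eq_sum[of ?S u p X] linking_eq_sum[of ?S v p X] by simp
  then show ?thesis
    using invariant_eq_sum[of ?S u p] invariant_eq_sum[of ?S v p] by simp
qed

lemma invariant_iso:
  assumes "nw_iso u v"
  shows "invariant u = invariant v"
proof -
  obtain w p w' p' where u: "u = (w, p)" and v: "v = (w', p')"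
    by (cases u, cases v) auto
  obtain f where f: "bij_betw f (set w) (set w')" and p': "\<And>X. X \<in> set w \<Longrightarrow> p' (f X) = p X"
    and w': "w' = map f w"
    using assms by (auto simp: nw_iso_def u v)
  have inj: "inj_on f (set w)"
    using f by (rule bij_betw_imp_inj_on)
  have linking_f: "linking w' p' (f X) = linking w p X" if "X \<in> set w" for X
  proof -
    have "linking w' p' (f X) = (\<Sum>Y\<in>set w. linking_term w' p' (f X) (f Y))"
      unfolding linking_def by (rule sum.reindex_bij_betw[OF f, symmetric])
    also have "\<dots> = linking w p X"
      unfolding linking_def
      by (rule sum.cong) (simp_all add: linking_term_def w' interlaced_map[OF inj] that p')
    finally show ?thesis .
  qed
  have "invariant v = (\<Sum>X\<in>set w. \<psi> (p' (f X)) (linking w' p' (f X)))"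
    unfolding v invariant_def fst_conv snd_conv by (rule sum.reindex_bij_betw[OF f, symmetric])
  also have "\<dots> = invariant u"
    unfolding u invariant_def fst_conv snd_conv by (rule sum.cong) (simp_all add: linking_f p')
  finally show ?thesis by simp
qed

lemma invariant_move_1:
  assumes "is_nanoword (x @ [A, A] @ y, p)"
  shows "invariant (x @ [A, A] @ y, p) = invariant (x @ y, p)"
proof (rule invariant_cong)
  have A: "A \<notin> set x" "A \<notin> set y"
    using assms by (auto simp: is_nanoword_def count_list_0_iff[symmetric])
  show "interlaced (x @ [A, A] @ y) X Y \<longleftrightarrow> interlaced (x @ y) X Y" for X Y
  proof (cases "A = X \<or> A = Y")
    case True
    then have "\<not> interlaced (x @ y) X Y"
      using A interlaced_mem by fastforce
    moreover have "\<not> interlaced (x @ [A, A] @ y) X Y"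
    proof (cases "X = Y")
      case True
      then show ?thesis
        using A \<open>A = X \<or> A = Y\<close> by (auto simp: interlaced_def filter_eq_Nil_if_not_mem)
    next
      case False
      then show ?thesis
        using \<open>A = X \<or> A = Y\<close> by (auto simp: interlaced_def dest: alternating_eq_append_Cons_Cons)
    qed
    ultimately show ?thesis by simp
  next
    case False
    then show ?thesis by (simp add: interlaced_def)
  qed
qed

lemma invariant_move_2:
  assumes nw: "is_nanoword (x @ [A, B] @ y @ [B, A] @ z, p)" and pB: "p B = \<tau> (p A)"
  shows "invariant (x @ [A, B] @ y @ [B, A] @ z, p) = invariant (x @ y @ z, p)"
proof -
  define u where "u = x @ [A, B] @ y @ [B, A] @ z"
  define v where "v = x @ y @ z"
  have count: "count_list u A = 2" "count_list u B = 2"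
    using nw by (auto simp: is_nanoword_def u_def)
  then have AB: "A \<noteq> B"
    by (auto simp: u_def)
  have letters: "{A, B} \<inter> set (x @ y @ z) = {}"
    using count AB by (auto simp: u_def count_list_0_iff[symmetric])
  then have set_u: "set u = insert A (insert B (set v))" and AB_v: "A \<notin> set v" "B \<notin> set v"
    by (auto simp: u_def v_def)
  note apart = interlaced_move_2(1)[OF letters AB, folded u_def]
  note twins = interlaced_move_2(2,3)[OF letters AB, folded u_def]
  have same: "interlaced u X Y \<longleftrightarrow> interlaced v X Y" if "X \<notin> {A, B}" "Y \<notin> {A, B}" for X Y
    using that by (simp add: u_def v_def interlaced_def)
  have linking_A_B: "linking u p A = linking u p B"
    unfolding linking_def
  proof (rule sum.cong)
    show "linking_term u p A Y = linking_term u p B Y" for Y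
      by (cases "Y \<in> {A, B}") (simp_all add: linking_term_def apart twins)
  qed simp
  have linking_other: "linking u p D = linking v p D" if "D \<notin> {A, B}" for D
  proof -
    have "linking u p D = linking_term u p D A + (linking_term u p D B +
        (\<Sum>Y\<in>set v. linking_term u p D Y))"
      unfolding linking_def set_u using AB AB_v by simp
    also have "\<dots> = (\<Sum>Y\<in>set v. linking_term u p D Y)"
      using twins[OF that] by (simp add: linking_term_def pB \<chi>\<^sub>1_\<tau> \<chi>\<^sub>2_\<tau>)
    also have "\<dots> = linking v p D"
      unfolding linking_def
    proof (rule sum.cong)
      fix Y
      assume "Y \<in> set v"
      then have "Y \<notin> {A, B}"
        using AB_v by auto
      then show "linking_term u p D Y = linking_term v p D Y"
        using same[OF that] same[OF _ that] by (simp add: linking_term_def)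
    qed simp
    finally show ?thesis .
  qed
  have "invariant (u, p) = \<psi> (p A) (linking u p A) + (\<psi> (p B) (linking u p B) +
      (\<Sum>X\<in>set v. \<psi> (p X) (linking u p X)))"
    unfolding invariant_def fst_conv snd_conv set_u using AB AB_v by simp
  also have "\<dots> = (\<Sum>X\<in>set v. \<psi> (p X) (linking u p X))"
    by (simp add: linking_A_B pB \<psi>_\<tau>)
  also have "\<dots> = invariant (v, p)"
    unfolding invariant_def fst_conv snd_conv using linking_other AB_v by (intro sum.cong) force+
  finally show ?thesis
    by (simp add: u_def v_def)
qed

lemma invariant_move_3:
  assumes nw: "is_nanoword (x @ [A, B] @ y @ [A, C] @ z @ [B, C] @ t, p)"
    and distinct: "A \<noteq> B" "B \<noteq> C" "A \<noteq> C" and p: "p A = p B" "p B = p C"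
  shows "invariant (x @ [A, B] @ y @ [A, C] @ z @ [B, C] @ t, p) =
         invariant (x @ [B, A] @ y @ [C, A] @ z @ [C, B] @ t, p)"
proof -
  define u where "u = x @ [A, B] @ y @ [A, C] @ z @ [B, C] @ t"
  define v where "v = x @ [B, A] @ y @ [C, A] @ z @ [C, B] @ t"
  have "count_list u A = 2" "count_list u B = 2" "count_list u C = 2"
    using nw by (auto simp: is_nanoword_def u_def)
  then have letters: "{A, B, C} \<inter> set (x @ y @ z @ t) = {}"
    using distinct by (auto simp: u_def count_list_0_iff[symmetric])
  note interlaced_u_v = interlaced_move_3[OF letters distinct, folded u_def v_def]
  have set_v: "set v = set u" and ABC: "{A, B, C} \<subseteq> set u"
    by (auto simp: u_def v_def)
  have linking_split: "linking w p X = (\<Sum>Y\<in>set u - {A, B, C}. linking_term w p X Y) +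
      (\<Sum>Y\<in>{A, B, C}. linking_term w p X Y)" if "set w = set u" for w X
    unfolding linking_def that by (rule sum.subset_diff[OF ABC finite_set])
  have "linking u p X = linking v p X + (if X = B then \<chi>\<^sub>1 (p B) + \<chi>\<^sub>2 (p B) else 0)" for X
  proof -
    have "(\<Sum>Y\<in>set u - {A, B, C}. linking_term u p X Y) = (\<Sum>Y\<in>set u - {A, B, C}. linking_term v p X Y)"
      by (rule sum.cong) (simp_all add: linking_term_def interlaced_u_v(1) distinct)
    moreover have "(\<Sum>Y\<in>{A, B, C}. linking_term u p X Y) =
        (\<Sum>Y\<in>{A, B, C}. linking_term v p X Y) + (if X = B then \<chi>\<^sub>1 (p B) + \<chi>\<^sub>2 (p B) else 0)"
    proof (cases "X \<in> {A, B, C}")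
      case True
      then show ?thesis
        using distinct by (auto simp: linking_term_def interlaced_u_v(2,3) p)
    next
      case False
      then show ?thesis
        using distinct by (auto simp: linking_term_def interlaced_u_v(1))
    qed
    ultimately show ?thesis
      using linking_split[of u X] linking_split[OF set_v, of X] by (simp add: algebra_simps)
  qed
  then have "\<psi> (p X) (linking u p X) = \<psi> (p X) (linking v p X)" for X
    by (cases "X = B") (simp_all add: \<psi>_periodic)
  then have "invariant (u, p) = invariant (v, p)"
    unfolding invariant_def fst_conv snd_conv set_v by simp
  then show ?thesis
    by (simp add: u_def v_def)
qed

lemma invariant_move:
  assumes "nw_move \<tau> u v"
  shows "invariant u = invariant v"
proof -
  obtain w p w' where u: "u = (w, p)" and v: "v = (w', p)" and nw: "is_nanoword (w, p)"
    using assms by (cases u, cases v) (auto simp: nw_move_def)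
  from assms consider
      (1) x y A where "w = x @ [A, A] @ y" "w' = x @ y"
    | (2) x y z A B where "w = x @ [A, B] @ y @ [B, A] @ z" "w' = x @ y @ z" "p B = \<tau> (p A)"
    | (3) x y z t A B C where "w = x @ [A, B] @ y @ [A, C] @ z @ [B, C] @ t"
        "w' = x @ [B, A] @ y @ [C, A] @ z @ [C, B] @ t"
        "A \<noteq> B" "B \<noteq> C" "A \<noteq> C" "p A = p B" "p B = p C"
    unfolding nw_move_def u v by auto
  then show ?thesis
  proof cases
    case 1
    then show ?thesis using invariant_move_1 nw u v by simp
  next
    case 2
    then show ?thesis using invariant_move_2 nw u v by simp
  next
    case 3
    then show ?thesis using invariant_move_3 nw u v by simp
  qed
qed

lemma invariant_homotopic:
  assumes "nw_homotopic \<tau> u v"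
  shows "invariant u = invariant v"
  using assms unfolding nw_homotopic_def
proof (induction rule: rtranclp_induct)
  case (step v v')
  then show ?case
    using invariant_iso[of v v'] invariant_iso[of v' v] invariant_move[of v v'] invariant_move[of v' v]
    by (auto elim: symclpE)
qed simp

lemma invariant_nw_empty: "invariant nw_empty = 0"
  by (simp add: invariant_def nw_empty_def)

lemma invariant_w_ab: "invariant (w_ab a b) = \<psi> a (\<chi>\<^sub>1 b) + \<psi> b (\<chi>\<^sub>2 a)"
proof -
  have "set [0::nat, 1, 0, 1] = {0, 1}"
    by auto
  then show ?thesis
    by (simp add: invariant_def linking_def linking_term_def interlaced_def w_ab_def)
qed

end

text \<open>The image of \<open>x\<close> in the summand of the orbit of \<open>z\<close> in the abelian group generated by the
  letters subject to \<open>x + \<tau> x = 0\<close>: that summand is \<open>\<int>\<close> or, if \<open>\<tau> z = z\<close>, \<open>\<int>/2\<close>, and both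
  embed into \<open>\<int>/4\<close>.\<close>

definition signed_indicator :: "('a \<Rightarrow> 'a) \<Rightarrow> 'a \<Rightarrow> 'a \<Rightarrow> 4" where
  "signed_indicator \<tau> z x =
     (if x = z then (if \<tau> z = z then 2 else 1) else if x = \<tau> z then - 1 else 0)"

lemma signed_indicator_\<tau>:
  assumes "\<And>x. \<tau> (\<tau> x) = x"
  shows "signed_indicator \<tau> z (\<tau> x) = - signed_indicator \<tau> z x"
proof -
  have "\<tau> x = z \<longleftrightarrow> x = \<tau> z" "\<tau> x = \<tau> z \<longleftrightarrow> x = z"
    by (metis assms)+
  then show ?thesis
    by (auto simp: signed_indicator_def)
qed

lemma signed_indicator_self_neq_0: "signed_indicator \<tau> z z \<noteq> 0"
  by (simp add: signed_indicator_def)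

lemma signed_indicator_eq_self_iff: "signed_indicator \<tau> z x = signed_indicator \<tau> z z \<longleftrightarrow> x = z"
  by (simp add: signed_indicator_def)

lemma neg_signed_indicator_eq_self_iff:
  "- signed_indicator \<tau> z x = signed_indicator \<tau> z z \<longleftrightarrow> x = \<tau> z"
  by (auto simp: signed_indicator_def)

lemma signed_indicator_eq_0_iff: "signed_indicator \<tau> z x = 0 \<longleftrightarrow> x \<noteq> z \<and> x \<noteq> \<tau> z"
  by (simp add: signed_indicator_def)

definition pair_detector :: "('a \<Rightarrow> 'a) \<Rightarrow> 'a \<Rightarrow> 'a \<Rightarrow> 'a \<Rightarrow> 4 \<Rightarrow> 4" where
  "pair_detector \<tau> a b x L = (if L = signed_indicator \<tau> b b then signed_indicator \<tau> a x else 0)"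

lemma linking_invariant_symmetric:
  assumes "\<And>x. \<tau> (\<tau> x) = x"
  shows "linking_invariant \<tau> (signed_indicator \<tau> b) (\<lambda>x. - signed_indicator \<tau> b x) (pair_detector \<tau> a b)"
  by unfold_locales
    (simp_all add: pair_detector_def signed_indicator_self_neq_0 signed_indicator_\<tau>[OF assms])

lemma linking_invariant_one_sided:
  assumes invol: "\<And>x. \<tau> (\<tau> x) = x" and "a \<noteq> b" "\<tau> a \<noteq> b"
  shows "linking_invariant \<tau> (signed_indicator \<tau> b) (\<lambda>_. 0) (pair_detector \<tau> a b)"
proof
  show "pair_detector \<tau> a b x (L + (signed_indicator \<tau> b x + 0)) = pair_detector \<tau> a b x L" for x L
  proof (cases "signed_indicator \<tau> a x = 0")
    case False
    then have "x = a \<or> x = \<tau> a"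
      by (simp add: signed_indicator_eq_0_iff)
    then have "signed_indicator \<tau> b x = 0"
      using assms unfolding signed_indicator_eq_0_iff by metis
    then show ?thesis by simp
  qed (simp add: pair_detector_def)
qed (simp_all add: pair_detector_def signed_indicator_self_neq_0 signed_indicator_\<tau>[OF invol])

text \<open>With \<open>\<chi>\<^sub>2 = - \<chi>\<^sub>1\<close> the value on \<open>w_ab a b\<close> does not change under \<open>(a, b) \<mapsto> (\<tau> b, a)\<close>, which
  is harmless only if \<open>a = b\<close>; for \<open>a \<noteq> b\<close> one may take \<open>\<chi>\<^sub>2 = 0\<close>, because \<open>\<psi> x\<close> vanishes
  outside the orbit of \<open>a\<close> and \<open>\<chi>\<^sub>1\<close> vanishes on it.\<close>

lemma w_ab_separating_invariant:
  fixes \<tau> :: "'a \<Rightarrow> 'a"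
  assumes invol: "\<And>x. \<tau> (\<tau> x) = x" and ab: "\<tau> a \<noteq> b"
  obtains I :: "'a nanoword \<Rightarrow> 4"
  where "\<And>u v. nw_homotopic \<tau> u v \<Longrightarrow> I u = I v" and "I (w_ab a b) \<noteq> I nw_empty"
    and "\<And>a' b'. \<tau> a' \<noteq> b' \<Longrightarrow> I (w_ab a' b') = I (w_ab a b) \<Longrightarrow> a' = a \<and> b' = b"
proof (cases "a = b")
  case True
  interpret linking_invariant \<tau> "signed_indicator \<tau> b" "\<lambda>x. - signed_indicator \<tau> b x" "pair_detector \<tau> a b"
    using invol by (rule linking_invariant_symmetric)
  have invariant_w_ab_eq: "invariant (w_ab x y) = (if y = b then signed_indicator \<tau> a x else 0) +
      (if x = \<tau> b then signed_indicator \<tau> a y else 0)" for x y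
    by (simp add: invariant_w_ab pair_detector_def signed_indicator_eq_self_iff neg_signed_indicator_eq_self_iff)
  show thesis
  proof (rule that[of invariant])
    show "invariant (w_ab a b) \<noteq> invariant nw_empty"
      unfolding invariant_w_ab_eq invariant_nw_empty
      using ab True by (simp add: signed_indicator_self_neq_0)
    show "a' = a \<and> b' = b" if "\<tau> a' \<noteq> b'" "invariant (w_ab a' b') = invariant (w_ab a b)" for a' b'
      using that unfolding invariant_w_ab_eq
      using ab True invol by (auto simp: signed_indicator_eq_self_iff signed_indicator_self_neq_0 split: if_splits)
  qed (rule invariant_homotopic)
next
  case False
  interpret linking_invariant \<tau> "signed_indicator \<tau> b" "\<lambda>_. 0" "pair_detector \<tau> a b"
    using invol False ab by (rule linking_invariant_one_sided)
  have invariant_w_ab_eq: "invariant (w_ab x y) = (if y = b then signed_indicator \<tau> a x else 0)" for x y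
    by (simp add: invariant_w_ab pair_detector_def signed_indicator_eq_self_iff signed_indicator_self_neq_0)
  show thesis
  proof (rule that[of invariant])
    show "invariant (w_ab a b) \<noteq> invariant nw_empty"
      by (simp add: invariant_w_ab_eq invariant_nw_empty signed_indicator_self_neq_0)
    show "a' = a \<and> b' = b" if "invariant (w_ab a' b') = invariant (w_ab a b)" for a' b'
      using that by (auto simp: invariant_w_ab_eq signed_indicator_eq_self_iff signed_indicator_self_neq_0 split: if_splits)
  qed (rule invariant_homotopic)
qed

theorem theorem8p3:
  fixes \<tau> :: "'a \<Rightarrow> 'a"
  assumes invol: "\<And>x. \<tau> (\<tau> x) = x"
  shows "(\<forall>a b. \<tau> a \<noteq> b \<longrightarrow> \<not> nw_contractible \<tau> (w_ab a b))
    \<and> (\<forall>a b a' b'. \<tau> a \<noteq> b \<longrightarrow> \<tau> a' \<noteq> b' \<longrightarrow>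
          (nw_homotopic \<tau> (w_ab a b) (w_ab a' b') \<longleftrightarrow> a = a' \<and> b = b'))"
proof (intro conjI allI impI)
  fix a b
  assume "\<tau> a \<noteq> b"
  then obtain I :: "'a nanoword \<Rightarrow> 4" where "\<And>u v. nw_homotopic \<tau> u v \<Longrightarrow> I u = I v"
    and "I (w_ab a b) \<noteq> I nw_empty"
    by (rule w_ab_separating_invariant[OF invol]) blast
  then show "\<not> nw_contractible \<tau> (w_ab a b)"
    unfolding nw_contractible_def by blast
next
  fix a b a' b'
  assume "\<tau> a \<noteq> b" and "\<tau> a' \<noteq> b'"
  obtain I :: "'a nanoword \<Rightarrow> 4" where "\<And>u v. nw_homotopic \<tau> u v \<Longrightarrow> I u = I v"
    and "I (w_ab a' b') = I (w_ab a b) \<Longrightarrow> a' = a \<and> b' = b"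
    using w_ab_separating_invariant[OF invol \<open>\<tau> a \<noteq> b\<close>] \<open>\<tau> a' \<noteq> b'\<close> by metis
  moreover have "nw_homotopic \<tau> u u" for u
    by (simp add: nw_homotopic_def)
  ultimately show "nw_homotopic \<tau> (w_ab a b) (w_ab a' b') \<longleftrightarrow> a = a' \<and> b = b'"
    by metis
qed

end
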